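(* Let $\alpha>0$, $M,\tilde M>0$ with $M/\tilde M\ge(1-5^{-\alpha})^{-1}\bigl(1+\frac{1}{5^\alpha-3^\alpha}\bigr)80^\alpha$, and let $n\ge1$. With the construction below, for every $\mathcal Z_{\boldsymbol\kappa_{\bar a},\bar a}\in\mathcal U_{\bar a}$, the function $y=y_{\mathcal C}(\cdot\mid\boldsymbol\kappa_{\bar a},\bar a)$ has unique maximizer $\mathbf{x}^*=\mathbf{c}_{\boldsymbol\kappa_{\bar a},\bar a}$ on $[0,1]^d$ and satisfies $\tilde M\|\mathbf{x}^*-\mathbf{x}\|_\infty^\alpha\le|y(\mathbf{x}^* )-y(\mathbf{x})|\le M\|\mathbf{x}^*-\mathbf{x}\|_\infty^\alpha$ for all $\mathbf{x}\in[0,1]^d$.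
   Context: $\|\mathbf{x}\|_\infty=\max_l|x_l|$. Let $\Delta=\lfloor3^d/2\rfloor$, $\bar a=\lceil4(n+1)/\Delta\rceil+2$, $\gamma_a=5^{-a}/2$, $\hat M=\frac{40^\alpha}{5^\alpha-3^\alpha}\tilde M$. For $a=0,\dots,\bar a$ and $\boldsymbol\kappa_a\in\{1,\dots,5^a\}^d$ let $\mathbf{c}_{\boldsymbol\kappa_a,a}=((2\kappa_{1,a}-1)\gamma_a,\dots,(2\kappa_{d,a}-1)\gamma_a)$ and $\mathcal Z_{\boldsymbol\kappa_a,a}=\{\mathbf{x}\in[0,1]^d:\|\mathbf{x}-\mathbf{c}_{\boldsymbol\kappa_a,a}\|_\infty<\gamma_a\}$. For $a\ge1$, $\mathcal P(\boldsymbol\kappa_a)$ is the level-$(a-1)$ index with $\mathcal Z_{\boldsymbol\kappa_a,a}\subset\mathcal Z_{\mathcal P(\boldsymbol\kappa_a),a-1}$, $\mathcal P^\ell$ its iterate. $\mathcal U_0=\{\mathcal Z_{\mathbf 1,0}\}$; for $a\ge1$, $\mathcal U_a=\{\mathcal Z_{\boldsymbol\kappa_a,a}:\mathcal Z_{\mathcal P(\boldsymbol\kappa_a),a-1}\in\mathcal U_{a-1},\ \|\mathbf{c}_{\boldsymbol\kappa_a,a}-\mathbf{c}_{\mathcal P(\boldsymbol\kappa_a),a-1}\|_\infty\le2\gamma_a\}$. Components on $[0,1]^d$: $y_{\mathcal S}(\mathbf{x}\mid\mathbf 1,0)=\hat M(5^\alpha-3^\alpha)\gamma_1^\alpha$ if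 $\|\mathbf{x}-\mathbf{c}_{\mathbf 1,0}\|_\infty\le3\gamma_1$, $=\hat M5^\alpha\gamma_1^\alpha-\hat M\|\mathbf{x}-\mathbf{c}_{\mathbf 1,0}\|_\infty^\alpha$ if $3\gamma_1\le\|\mathbf{x}-\mathbf{c}_{\mathbf 1,0}\|_\infty\le5\gamma_1$; for $1\le a\le\bar a-1$, $y_{\mathcal S}(\mathbf{x}\mid\boldsymbol\kappa_a,a)=\hat M(5^\alpha-3^\alpha)\gamma_{a+1}^\alpha$ if $\|\mathbf{x}-\mathbf{c}_{\boldsymbol\kappa_a,a}\|_\infty\le3\gamma_{a+1}$, $=\hat M5^\alpha\gamma_{a+1}^\alpha-\hat M\|\mathbf{x}-\mathbf{c}_{\boldsymbol\kappa_a,a}\|_\infty^\alpha$ if $3\gamma_{a+1}<\|\cdot\|_\infty\le5\gamma_{a+1}$, $=0$ otherwise; $y_{\mathcal D}(\mathbf{x}\mid\boldsymbol\kappa_{\bar a},\bar a)=\hat M\gamma_{\bar a}^\alpha-\hat M\|\mathbf{x}-\mathbf{c}_{\boldsymbol\kappa_{\bar a},\bar a}\|_\infty^\alpha$ if $\|\mathbf{x}-\mathbf{c}_{\boldsymbol\kappa_{\bar a},\bar a}\|_\infty\le\gamma_{\bar a}$, $=0$ otherwise. $y_{\mathcal C}(\mathbf{x}\mid\boldsymbol\kappa_{\bar a},\bar a)=y_{\mathcal D}(\mathbf{x}\mid\boldsymbol\kappa_{\bar a},\bar a)+\sum_{\ell=1}^{\bar a-1}y_{\mathcal S}(\mathbf{x}\mid\mathcal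 P^\ell(\boldsymbol\kappa_{\bar a}),\bar a-\ell)+y_{\mathcal S}(\mathbf{x}\mid\mathbf 1,0)$. *)

theory Defs
  imports "HOL-Analysis.Analysis"
begin

text \<open>Points of [0,1]^d are vectors of type real^'d with d = CARD('d).
  Multi-indices kappa in {1..5^a}^d are functions 'd => nat.\<close>

definition linf :: "real^'d::finite \<Rightarrow> real" where
  "linf x = Max (range (\<lambda>i. \<bar>x $ i\<bar>))"

definition unitcube :: "(real^'d::finite) set" where
  "unitcube = {x. \<forall>i. 0 \<le> x $ i \<and> x $ i \<le> 1}"

definition gam :: "nat \<Rightarrow> real" where
  "gam a = (1/5) ^ a / 2"

definition idx :: "nat \<Rightarrow> ('d::finite \<Rightarrow> nat) set" where
  "idx a = {\<kappa>. \<forall>i. 1 \<le> \<kappa> i \<and> \<kappa> i \<le> 5 ^ a}"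

definition cen :: "('d::finite \<Rightarrow> nat) \<Rightarrow> nat \<Rightarrow> real^'d" where
  "cen \<kappa> a = (\<chi> i. (2 * real (\<kappa> i) - 1) * gam a)"

definition Zc :: "('d::finite \<Rightarrow> nat) \<Rightarrow> nat \<Rightarrow> (real^'d) set" where
  "Zc \<kappa> a = {x \<in> unitcube. linf (x - cen \<kappa> a) < gam a}"

definition par :: "('d::finite \<Rightarrow> nat) \<Rightarrow> nat \<Rightarrow> ('d \<Rightarrow> nat)" where
  "par \<kappa> a = (THE \<kappa>'. \<kappa>' \<in> idx (a - 1) \<and> Zc \<kappa> a \<subseteq> Zc \<kappa>' (a - 1))"

fun piter :: "('d::finite \<Rightarrow> nat) \<Rightarrow> nat \<Rightarrow> nat \<Rightarrow> ('d \<Rightarrow> nat)" where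
  "piter \<kappa> a 0 = \<kappa>"
| "piter \<kappa> a (Suc l) = par (piter \<kappa> a l) (a - l)"

fun U :: "nat \<Rightarrow> (real^'d::finite) set set" where
  "U 0 = {Zc (\<lambda>_. 1) 0}"
| "U (Suc a) = {Zc \<kappa> (Suc a) | \<kappa>. \<kappa> \<in> idx (Suc a) \<and>
       Zc (par \<kappa> (Suc a)) a \<in> U a \<and>
       linf (cen \<kappa> (Suc a) - cen (par \<kappa> (Suc a)) a) \<le> 2 * gam (Suc a)}"

definition Delta :: "nat \<Rightarrow> nat" where
  "Delta d = 3 ^ d div 2"

definition abar :: "nat \<Rightarrow> nat \<Rightarrow> nat" where
  "abar n d = nat \<lceil>4 * (real n + 1) / real (Delta d)\<rceil> + 2"

definition Mhat :: "real \<Rightarrow> real \<Rightarrow> real" where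
  "Mhat \<alpha> Mt = 40 powr \<alpha> / (5 powr \<alpha> - 3 powr \<alpha>) * Mt"

definition yS0 :: "real \<Rightarrow> real \<Rightarrow> real^'d::finite \<Rightarrow> real" where
  "yS0 \<alpha> Mt x = (let r = linf (x - cen (\<lambda>_. 1) 0) in
     if r \<le> 3 * gam 1 then Mhat \<alpha> Mt * (5 powr \<alpha> - 3 powr \<alpha>) * gam 1 powr \<alpha>
     else if r \<le> 5 * gam 1 then Mhat \<alpha> Mt * 5 powr \<alpha> * gam 1 powr \<alpha> - Mhat \<alpha> Mt * r powr \<alpha>
     else 0)"

definition yS :: "real \<Rightarrow> real \<Rightarrow> ('d::finite \<Rightarrow> nat) \<Rightarrow> nat \<Rightarrow> real^'d \<Rightarrow> real" where
  "yS \<alpha> Mt \<kappa> a x = (let r = linf (x - cen \<kappa> a) in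
     if r \<le> 3 * gam (a+1) then Mhat \<alpha> Mt * (5 powr \<alpha> - 3 powr \<alpha>) * gam (a+1) powr \<alpha>
     else if r \<le> 5 * gam (a+1) then Mhat \<alpha> Mt * 5 powr \<alpha> * gam (a+1) powr \<alpha> - Mhat \<alpha> Mt * r powr \<alpha>
     else 0)"

definition yD :: "real \<Rightarrow> real \<Rightarrow> ('d::finite \<Rightarrow> nat) \<Rightarrow> nat \<Rightarrow> real^'d \<Rightarrow> real" where
  "yD \<alpha> Mt \<kappa> a x = (let r = linf (x - cen \<kappa> a) in
     if r \<le> gam a then Mhat \<alpha> Mt * gam a powr \<alpha> - Mhat \<alpha> Mt * r powr \<alpha> else 0)"

definition yC :: "real \<Rightarrow> real \<Rightarrow> ('d::finite \<Rightarrow> nat) \<Rightarrow> nat \<Rightarrow> real^'d \<Rightarrow> real" where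
  "yC \<alpha> Mt \<kappa> A x = yD \<alpha> Mt \<kappa> A x
     + (\<Sum>l\<in>{1..A-1}. yS \<alpha> Mt (piter \<kappa> A l) (A - l) x) + yS0 \<alpha> Mt x"

end

(*
  Let c_0, ..., c_A = c be the centres of the ancestors of the innermost cube.
  Consecutive centres satisfy |c_(j+1) - c_j| <= 2 gam (j+1), and summing the
  geometric series gives |c - c_j| <= 5/2 gam (j+1) < 3 gam (j+1): the point c
  sits on every plateau and on the peak.  Hence y(c) - y(x) is a sum of
  nonnegative losses, one per level.  Write r = |c - x|.
  Lower bound: if x lies in the innermost cube, the peak alone loses Mhat r^alpha;
  otherwise x leaves the cube of some first level j + 1, loses that whole plateau
  Mt (8 gam (j+1))^alpha, and r <= 15/2 gam (j+1).
  Upper bound: the peak loses at most Mhat r^alpha, and level j loses anything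
  only if gam (j+1) < 2 r, so the remaining losses form a truncated geometric
  series bounded by Mt (80 r)^alpha / (1 - 5^-alpha).
*)

theory Submission
  imports Defs
begin

lemma sum_geometric_le:
  fixes g :: "nat \<Rightarrow> real"
  assumes g: "\<And>k. 0 \<le> g k" "\<And>k. g (Suc k) = q * g k" and q: "0 \<le> q" "q < 1"
  shows "(\<Sum>j<N. g j) \<le> g 0 / (1 - q)"
  using g
proof (induction N arbitrary: g)
  case 0
  then show ?case
    using q by simp
next
  case (Suc N)
  have "(\<Sum>j<Suc N. g j) = g 0 + (\<Sum>j<N. g (Suc j))"
    by (subst sum.lessThan_Suc_shift) simp
  also have "\<dots> \<le> g 0 + g 1 / (1 - q)"
    using Suc.IH[of "\<lambda>j. g (Suc j)"] Suc.prems by fastforce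
  also have "\<dots> = g 0 / (1 - q)"
    using q Suc.prems(2)[of 0] by (simp add: field_simps)
  finally show ?case .
qed

lemma sum_geometric_bounded_terms_le:
  fixes g :: "nat \<Rightarrow> real"
  assumes g: "\<And>k. 0 \<le> g k" "\<And>k. g (Suc k) = q * g k" and q: "0 \<le> q" "q < 1" and "0 \<le> B"
  shows "(\<Sum>j<N. if g j \<le> B then g j else 0) \<le> B / (1 - q)"
  using g
proof (induction N arbitrary: g)
  case 0
  then show ?case
    using \<open>0 \<le> B\<close> q by simp
next
  case (Suc N)
  show ?case
  proof (cases "g 0 \<le> B")
    case True
    have "(\<Sum>j<Suc N. if g j \<le> B then g j else 0) \<le> (\<Sum>j<Suc N. g j)"
      using Suc.prems by (intro sum_mono) auto
    also have "\<dots> \<le> g 0 / (1 - q)"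
      using sum_geometric_le Suc.prems q by blast
    also have "\<dots> \<le> B / (1 - q)"
      using True q by (simp add: divide_right_mono)
    finally show ?thesis .
  next
    case False
    have "(\<Sum>j<Suc N. if g j \<le> B then g j else 0) = (\<Sum>j<N. if g (Suc j) \<le> B then g (Suc j) else 0)"
      using False by (subst sum.lessThan_Suc_shift) simp
    also have "\<dots> \<le> B / (1 - q)"
      by (rule Suc.IH) (rule Suc.prems)+
    finally show ?thesis .
  qed
qed

lemma argmax_eq_singleton:
  fixes f :: "'a \<Rightarrow> 'b::linorder"
  assumes "x0 \<in> S" and "\<And>x. x \<in> S \<Longrightarrow> x \<noteq> x0 \<Longrightarrow> f x < f x0"
  shows "{x \<in> S. \<forall>z \<in> S. f z \<le> f x} = {x0}"
proof -
  have "f z \<le> f x0" if "z \<in> S" for z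
    using assms(2)[OF that] by (cases "z = x0") (auto intro: less_imp_le)
  moreover have "x = x0" if "x \<in> S" and "f x0 \<le> f x" for x
    using assms(2)[OF that(1)] that(2) by force
  ultimately show ?thesis
    using assms(1) by blast
qed

lemma linf_eq_infnorm: "linf x = infnorm x"
  unfolding linf_def infnorm_cart by (simp add: cSup_eq_Max full_SetCompr_eq)

lemma linf_le_iff: "linf v \<le> t \<longleftrightarrow> (\<forall>i. \<bar>v $ i\<bar> \<le> t)"
  unfolding linf_def by (subst Max_le_iff) auto

lemma linf_less_iff: "linf v < t \<longleftrightarrow> (\<forall>i. \<bar>v $ i\<bar> < t)"
  unfolding linf_def by (subst Max_less_iff) auto

lemma linf_triangle: "linf (a - c) \<le> linf (a - b) + linf (b - c)"
  using infnorm_triangle[of "a - b" "b - c"] by (simp add: linf_eq_infnorm)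

lemma linf_commute: "linf (a - b) = linf (b - a)"
  by (simp add: linf_eq_infnorm infnorm_sub)

lemma gam_pos: "0 < gam a"
  by (simp add: gam_def)

lemma gam_Suc: "gam (Suc a) = gam a / 5"
  by (simp add: gam_def)

lemma cen_in_unitcube:
  assumes "\<kappa> \<in> idx a"
  shows "cen \<kappa> a \<in> unitcube"
proof -
  have "0 \<le> (2 * real (\<kappa> i) - 1) * gam a \<and> (2 * real (\<kappa> i) - 1) * gam a \<le> 1" for i
  proof -
    have "1 \<le> \<kappa> i" "\<kappa> i \<le> 5 ^ a"
      using assms by (auto simp: idx_def)
    then have "1 \<le> real (\<kappa> i)" "real (\<kappa> i) \<le> 5 ^ a"
      by (simp, metis of_nat_le_iff of_nat_numeral of_nat_power)
    then have "2 * real (\<kappa> i) - 1 \<le> 2 * 5 ^ a"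
      by linarith
    then have "(2 * real (\<kappa> i) - 1) * gam a \<le> 2 * 5 ^ a * gam a"
      using gam_pos[of a] by (simp add: mult_right_mono)
    also have "\<dots> = 1"
      by (simp add: gam_def power_one_over)
    finally show ?thesis
      using \<open>1 \<le> real (\<kappa> i)\<close> gam_pos[of a] by simp
  qed
  then show ?thesis
    by (simp add: unitcube_def cen_def)
qed

lemma cen_in_Zc: "\<kappa> \<in> idx a \<Longrightarrow> cen \<kappa> a \<in> Zc \<kappa> a"
  using cen_in_unitcube gam_pos[of a] by (simp add: Zc_def linf_eq_infnorm infnorm_0)

lemma Zc_index_unique:
  assumes "y \<in> Zc \<kappa> a" and "y \<in> Zc \<kappa>' a"
  shows "\<kappa> = \<kappa>'"
proof
  fix i
  have "\<bar>y $ i - (2 * real (\<kappa> i) - 1) * gam a\<bar> < gam a"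
    and "\<bar>y $ i - (2 * real (\<kappa>' i) - 1) * gam a\<bar> < gam a"
    using assms by (auto simp: Zc_def cen_def linf_less_iff)
  then have "gam a * real (\<kappa> i) < gam a * (real (\<kappa>' i) + 1)"
    and "gam a * real (\<kappa>' i) < gam a * (real (\<kappa> i) + 1)"
    by (simp_all add: abs_less_iff algebra_simps)
  then show "\<kappa> i = \<kappa>' i"
    using gam_pos[of a] by (simp only: mult_less_cancel_left_pos)
qed

lemma linf_unitcube_cen_0:
  assumes "x \<in> unitcube"
  shows "linf (x - cen (\<lambda>_. 1) 0) \<le> gam 0"
proof -
  have "0 \<le> x $ i" "x $ i \<le> 1" for i
    using assms by (simp_all add: unitcube_def)
  then have "\<bar>x $ i - 1 / 2\<bar> \<le> 1 / 2" for i
    unfolding abs_le_iff by (simp add: field_simps)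
  then show ?thesis
    unfolding linf_le_iff by (simp add: cen_def gam_def)
qed

lemma idx_0: "idx 0 = {\<lambda>_. 1}"
  by (auto simp: idx_def intro: antisym)

lemma child_interval_subset:
  fixes t h :: real and k :: nat
  assumes h: "0 < h" and t: "\<bar>t - (2 * real k - 1) * h\<bar> < h"
  shows "\<bar>t - (2 * real ((k + 4) div 5) - 1) * (5 * h)\<bar> < 5 * h"
proof -
  define p where "p = (k + 4) div 5"
  have "5 * p \<le> k + 4" "k \<le> 5 * p"
    by (simp_all add: p_def)
  then have "5 * real p \<le> real k + 4" "real k \<le> 5 * real p"
    by linarith+
  then have "h * (5 * real p) \<le> h * (real k + 4)" "h * real k \<le> h * (5 * real p)"
    using mult_left_mono less_imp_le[OF h] by blast+
  moreover have "h * (2 * real k) - 2 * h < t" "t < h * (2 * real k)"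
    using t by (simp_all add: abs_less_iff algebra_simps)
  ultimately show ?thesis
    unfolding p_def[symmetric] abs_less_iff by (simp only: algebra_simps) linarith
qed

lemma Zc_Suc_subset_parent: "Zc \<kappa> (Suc b) \<subseteq> Zc (\<lambda>i. (\<kappa> i + 4) div 5) b"
proof
  fix x
  assume x: "x \<in> Zc \<kappa> (Suc b)"
  then have "\<bar>x $ i - (2 * real (\<kappa> i) - 1) * gam (Suc b)\<bar> < gam (Suc b)" for i
    by (simp add: Zc_def linf_less_iff cen_def)
  moreover have "5 * gam (Suc b) = gam b"
    by (simp add: gam_Suc)
  ultimately have "\<bar>x $ i - (2 * real ((\<kappa> i + 4) div 5) - 1) * gam b\<bar> < gam b" for i
    using child_interval_subset[OF gam_pos] by metis
  then show "x \<in> Zc (\<lambda>i. (\<kappa> i + 4) div 5) b"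
    using x by (simp add: Zc_def linf_less_iff cen_def)
qed

lemma parent_in_idx:
  assumes "\<kappa> \<in> idx (Suc b)"
  shows "(\<lambda>i. (\<kappa> i + 4) div 5) \<in> idx b"
proof -
  have "1 \<le> (\<kappa> i + 4) div 5 \<and> (\<kappa> i + 4) div 5 \<le> 5 ^ b" for i
  proof -
    have "1 \<le> \<kappa> i" "\<kappa> i \<le> 5 * 5 ^ b"
      using assms by (auto simp: idx_def)
    then show ?thesis
      by presburger
  qed
  then show ?thesis
    by (simp add: idx_def)
qed

lemma par_Suc_eq:
  assumes "\<kappa> \<in> idx (Suc b)"
  shows "par \<kappa> (Suc b) = (\<lambda>i. (\<kappa> i + 4) div 5)"
  unfolding par_def
proof (rule the_equality)
  show "(\<lambda>i. (\<kappa> i + 4) div 5) \<in> idx (Suc b - 1) \<and> Zc \<kappa> (Suc b) \<subseteq> Zc (\<lambda>i. (\<kappa> i + 4) div 5) (Suc b - 1)"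
    using parent_in_idx[OF assms] Zc_Suc_subset_parent by simp
next
  fix \<kappa>'
  assume "\<kappa>' \<in> idx (Suc b - 1) \<and> Zc \<kappa> (Suc b) \<subseteq> Zc \<kappa>' (Suc b - 1)"
  then show "\<kappa>' = (\<lambda>i. (\<kappa> i + 4) div 5)"
    using cen_in_Zc[OF assms] Zc_Suc_subset_parent Zc_index_unique by (simp add: subset_iff) blast
qed

lemma U_Suc_parent:
  assumes "\<kappa> \<in> idx (Suc b)" and "Zc \<kappa> (Suc b) \<in> U (Suc b)"
  shows "par \<kappa> (Suc b) \<in> idx b" and "Zc (par \<kappa> (Suc b)) b \<in> U b"
    and "linf (cen \<kappa> (Suc b) - cen (par \<kappa> (Suc b)) b) \<le> 2 * gam (Suc b)"
proof -
  obtain \<kappa>' where eq: "Zc \<kappa> (Suc b) = Zc \<kappa>' (Suc b)"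
    and "Zc (par \<kappa>' (Suc b)) b \<in> U b"
    and "linf (cen \<kappa>' (Suc b) - cen (par \<kappa>' (Suc b)) b) \<le> 2 * gam (Suc b)"
    using assms(2) by auto
  moreover have "\<kappa> = \<kappa>'"
    using cen_in_Zc[OF assms(1)] eq Zc_index_unique by blast
  ultimately show "Zc (par \<kappa> (Suc b)) b \<in> U b"
    and "linf (cen \<kappa> (Suc b) - cen (par \<kappa> (Suc b)) b) \<le> 2 * gam (Suc b)"
    by simp_all
  show "par \<kappa> (Suc b) \<in> idx b"
    using parent_in_idx[OF assms(1)] par_Suc_eq[OF assms(1)] by simp
qed

lemma Mhat_mult_diff: "0 < \<alpha> \<Longrightarrow> Mhat \<alpha> Mt * (5 powr \<alpha> - 3 powr \<alpha>) = 40 powr \<alpha> * Mt"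
  using powr_less_mono2[of \<alpha> 3 5] by (simp add: Mhat_def)

lemma plateau_height:
  assumes "0 < \<alpha>"
  shows "Mhat \<alpha> Mt * (5 powr \<alpha> - 3 powr \<alpha>) * gam (a + 1) powr \<alpha> = Mt * (8 * gam a) powr \<alpha>"
proof -
  have "40 powr \<alpha> * gam (a + 1) powr \<alpha> = (40 * gam (a + 1)) powr \<alpha>"
    using gam_pos[of "a + 1"] by (simp add: powr_mult)
  also have "\<dots> = (8 * gam a) powr \<alpha>"
    by (simp add: gam_Suc)
  finally show ?thesis
    by (simp add: Mhat_mult_diff[OF assms])
qed

lemma Mhat_ge:
  assumes "0 < \<alpha>" and "0 < Mt"
  shows "8 powr \<alpha> * Mt \<le> Mhat \<alpha> Mt"
proof -
  have "0 < 5 powr \<alpha> - 3 powr \<alpha>"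
    using powr_less_mono2[of \<alpha> 3 5] assms(1) by simp
  moreover have "8 powr \<alpha> * Mt * (5 powr \<alpha> - 3 powr \<alpha>) \<le> 8 powr \<alpha> * Mt * 5 powr \<alpha>"
    using assms(2) by (simp add: mult_left_mono)
  moreover have "8 powr \<alpha> * Mt * 5 powr \<alpha> = 40 powr \<alpha> * Mt"
    using powr_mult[of 8 5 \<alpha>] by simp
  ultimately show ?thesis
    by (simp add: Mhat_def pos_le_divide_eq)
qed

lemma Mhat_pos: "0 < \<alpha> \<Longrightarrow> 0 < Mt \<Longrightarrow> 0 < Mhat \<alpha> Mt"
  using powr_less_mono2[of \<alpha> 3 5] by (simp add: Mhat_def)

lemma yS_bounds:
  assumes "0 < \<alpha>" and "0 < Mt"
  shows "0 \<le> yS \<alpha> Mt \<kappa> a x" and "yS \<alpha> Mt \<kappa> a x \<le> Mt * (8 * gam a) powr \<alpha>"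
proof -
  let ?r = "linf (x - cen \<kappa> a)" and ?g = "gam (a + 1)" and ?M = "Mhat \<alpha> Mt"
  have M: "0 < ?M"
    by (rule Mhat_pos[OF assms])
  have "0 \<le> ?M * 5 powr \<alpha> * ?g powr \<alpha> - ?M * ?r powr \<alpha>
      \<and> ?M * 5 powr \<alpha> * ?g powr \<alpha> - ?M * ?r powr \<alpha> \<le> ?M * (5 powr \<alpha> - 3 powr \<alpha>) * ?g powr \<alpha>"
    if "3 * ?g < ?r" "?r \<le> 5 * ?g"
  proof -
    have "(3 * ?g) powr \<alpha> \<le> ?r powr \<alpha>" "?r powr \<alpha> \<le> (5 * ?g) powr \<alpha>"
      using that gam_pos[of "a + 1"] assms(1) by (auto intro!: powr_mono2)
    then have "3 powr \<alpha> * ?g powr \<alpha> \<le> ?r powr \<alpha>" "?r powr \<alpha> \<le> 5 powr \<alpha> * ?g powr \<alpha>"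
      by (simp_all add: powr_mult)
    then show ?thesis
      using M by (simp add: algebra_simps mult_left_mono)
  qed
  moreover have "0 \<le> ?M * (5 powr \<alpha> - 3 powr \<alpha>) * ?g powr \<alpha>"
    using M powr_less_mono2[of \<alpha> 3 5] assms(1) by simp
  ultimately show "0 \<le> yS \<alpha> Mt \<kappa> a x" and "yS \<alpha> Mt \<kappa> a x \<le> Mt * (8 * gam a) powr \<alpha>"
    using plateau_height[OF assms(1), of Mt a] by (auto simp: yS_def Let_def)
qed

lemma yS_near:
  assumes "0 < \<alpha>" and "linf (x - cen \<kappa> a) \<le> 3 * gam (a + 1)"
  shows "yS \<alpha> Mt \<kappa> a x = Mt * (8 * gam a) powr \<alpha>"
proof -
  have "yS \<alpha> Mt \<kappa> a x = Mhat \<alpha> Mt * (5 powr \<alpha> - 3 powr \<alpha>) * gam (a + 1) powr \<alpha>"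
    using assms(2) by (simp add: yS_def Let_def)
  then show ?thesis
    by (simp only: plateau_height[OF assms(1)])
qed

lemma yS_far: "gam a < linf (x - cen \<kappa> a) \<Longrightarrow> yS \<alpha> Mt \<kappa> a x = 0"
  using gam_pos[of a] by (simp add: yS_def Let_def gam_Suc)

lemma yD_near:
  "linf (x - cen \<kappa> a) \<le> gam a
    \<Longrightarrow> yD \<alpha> Mt \<kappa> a x = Mhat \<alpha> Mt * gam a powr \<alpha> - Mhat \<alpha> Mt * linf (x - cen \<kappa> a) powr \<alpha>"
  by (simp add: yD_def Let_def)

lemma yD_far: "gam a < linf (x - cen \<kappa> a) \<Longrightarrow> yD \<alpha> Mt \<kappa> a x = 0"
  by (simp add: yD_def Let_def)

lemma yD_bounds:
  assumes "0 < \<alpha>" and "0 < Mt"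
  shows "yD \<alpha> Mt \<kappa> a x \<le> Mhat \<alpha> Mt * gam a powr \<alpha>"
    and "Mhat \<alpha> Mt * gam a powr \<alpha> - yD \<alpha> Mt \<kappa> a x \<le> Mhat \<alpha> Mt * linf (x - cen \<kappa> a) powr \<alpha>"
proof -
  have M: "0 < Mhat \<alpha> Mt"
    by (rule Mhat_pos[OF assms])
  show "yD \<alpha> Mt \<kappa> a x \<le> Mhat \<alpha> Mt * gam a powr \<alpha>"
    using M by (simp add: yD_def Let_def)
  show "Mhat \<alpha> Mt * gam a powr \<alpha> - yD \<alpha> Mt \<kappa> a x \<le> Mhat \<alpha> Mt * linf (x - cen \<kappa> a) powr \<alpha>"
  proof (cases "linf (x - cen \<kappa> a) \<le> gam a")
    case True
    then show ?thesis
      using M by (simp add: yD_near)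
  next
    case False
    then have "gam a powr \<alpha> \<le> linf (x - cen \<kappa> a) powr \<alpha>"
      using gam_pos[of a] assms(1) by (intro powr_mono2) auto
    then show ?thesis
      using False M by (simp add: yD_far)
  qed
qed

lemma Mhat_add_le:
  assumes "0 < \<alpha>" and "0 < Mt"
    and "M / Mt \<ge> (1 / (1 - 5 powr (- \<alpha>))) * (1 + 1 / (5 powr \<alpha> - 3 powr \<alpha>)) * 80 powr \<alpha>"
  shows "Mhat \<alpha> Mt + Mt * 80 powr \<alpha> / (1 - 5 powr - \<alpha>) \<le> M"
proof -
  define E where "E = 1 / (1 - 5 powr (- \<alpha>))"
  define D where "D = 5 powr \<alpha> - 3 powr \<alpha>"
  have "0 < D"
    using powr_less_mono2[of \<alpha> 3 5] assms(1) by (simp add: D_def)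
  have "1 \<le> E"
    using assms(1) by (simp add: E_def powr_minus_divide)
  have "40 powr \<alpha> \<le> 80 powr \<alpha>"
    using assms(1) by (simp add: powr_mono2)
  also have "\<dots> \<le> E * 80 powr \<alpha>"
    using \<open>1 \<le> E\<close> by (simp add: mult_le_cancel_right1)
  finally have "Mhat \<alpha> Mt \<le> Mt * E * 80 powr \<alpha> / D"
    using \<open>0 < D\<close> assms(2) by (simp add: Mhat_def D_def[symmetric] divide_right_mono)
  moreover have "Mt * (E * (1 + 1 / D) * 80 powr \<alpha>) \<le> M"
    using assms(2,3) by (simp add: E_def D_def pos_le_divide_eq mult.commute)
  moreover have "Mt * (E * (1 + 1 / D) * 80 powr \<alpha>) = Mt * E * 80 powr \<alpha> / D + Mt * E * 80 powr \<alpha>"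
    using \<open>0 < D\<close> by (simp add: field_simps)
  moreover have "Mt * 80 powr \<alpha> / (1 - 5 powr - \<alpha>) = Mt * E * 80 powr \<alpha>"
    by (simp add: E_def)
  ultimately show ?thesis
    by linarith
qed

locale cube_chain =
  fixes \<kappa> :: "'d::finite \<Rightarrow> nat" and A :: nat
  assumes idx_top: "\<kappa> \<in> idx A" and U_top: "Zc \<kappa> A \<in> U A"
begin

definition anc :: "nat \<Rightarrow> 'd \<Rightarrow> nat" where
  "anc j = piter \<kappa> A (A - j)"

definition ctr :: "nat \<Rightarrow> real^'d" where
  "ctr j = cen (anc j) j"

lemma anc_eq_par: "j < A \<Longrightarrow> anc j = par (anc (Suc j)) (Suc j)"
  by (simp add: anc_def Suc_diff_Suc[symmetric])

lemma anc_in_U: "j \<le> A \<Longrightarrow> anc j \<in> idx j \<and> Zc (anc j) j \<in> U j"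
proof (induction j rule: inc_induct)
  case base
  show ?case
    using idx_top U_top by (simp add: anc_def)
next
  case (step j)
  then show ?case
    using U_Suc_parent[of "anc (Suc j)" j] anc_eq_par by simp
qed

lemma anc_0: "anc 0 = (\<lambda>_. 1)"
  using anc_in_U[of 0] idx_0 by auto

lemma ctr_top: "ctr A = cen \<kappa> A"
  by (simp add: ctr_def anc_def)

lemma ctr_0: "ctr 0 = cen (\<lambda>_. 1) 0"
  by (simp add: ctr_def anc_0)

lemma linf_ctr_Suc: "j < A \<Longrightarrow> linf (ctr (Suc j) - ctr j) \<le> 2 * gam (Suc j)"
  using U_Suc_parent(3)[of "anc (Suc j)" j] anc_in_U[of "Suc j"] anc_eq_par
  by (simp add: ctr_def)

lemma linf_top_ctr: "j \<le> A \<Longrightarrow> linf (cen \<kappa> A - ctr j) \<le> 5 / 2 * gam (Suc j)"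
proof -
  assume "j \<le> A"
  then have "linf (ctr A - ctr j) \<le> 5 / 2 * gam (Suc j) - 5 / 2 * gam (Suc A)"
  proof (induction j rule: inc_induct)
    case base
    show ?case
      by (simp add: linf_eq_infnorm infnorm_0)
  next
    case (step j)
    have "linf (ctr A - ctr j) \<le> linf (ctr A - ctr (Suc j)) + linf (ctr (Suc j) - ctr j)"
      by (rule linf_triangle)
    also have "\<dots> \<le> (5 / 2 * gam (Suc (Suc j)) - 5 / 2 * gam (Suc A)) + 2 * gam (Suc j)"
      using step.IH linf_ctr_Suc[OF step.hyps(2)] by simp
    also have "\<dots> = 5 / 2 * gam (Suc j) - 5 / 2 * gam (Suc A)"
      by (simp add: gam_Suc[of "Suc j"])
    finally show ?case .
  qed
  then show ?thesis
    using gam_pos[of "Suc A"] by (simp add: ctr_top)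
qed

lemma yC_eq_sum:
  assumes "1 \<le> A"
  shows "yC \<alpha> Mt \<kappa> A x = yD \<alpha> Mt \<kappa> A x + (\<Sum>j<A. yS \<alpha> Mt (anc j) j x)"
proof -
  have "(\<Sum>l\<in>{1..A-1}. yS \<alpha> Mt (piter \<kappa> A l) (A - l) x) = (\<Sum>j\<in>{1..A-1}. yS \<alpha> Mt (anc j) j x)"
    by (rule sum.reindex_bij_witness[of _ "\<lambda>j. A - j" "\<lambda>l. A - l"]) (auto simp: anc_def)
  moreover have "{..<A} = insert 0 {1..A-1}"
    using assms by auto
  moreover have "yS0 \<alpha> Mt x = yS \<alpha> Mt (anc 0) 0 x"
    by (simp add: anc_0 yS0_def yS_def Let_def)
  ultimately show ?thesis
    by (simp add: yC_def)
qed

end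

locale yC_profile = cube_chain \<kappa> A for \<kappa> :: "'d::finite \<Rightarrow> nat" and A +
  fixes \<alpha> Mt :: real
  assumes alpha_pos: "0 < \<alpha>" and Mt_pos: "0 < Mt" and A_pos: "1 \<le> A"
begin

(* Mt (8 gam j)^alpha is the plateau value of the level-j summand yS (plateau_height);
   level A carries the peak yD instead. *)
definition gap :: "nat \<Rightarrow> real^'d \<Rightarrow> real" where
  "gap j x = (if j = A then Mhat \<alpha> Mt * gam A powr \<alpha> - yD \<alpha> Mt \<kappa> A x
              else Mt * (8 * gam j) powr \<alpha> - yS \<alpha> Mt (anc j) j x)"

lemma yC_drop_eq_sum_gap: "yC \<alpha> Mt \<kappa> A (cen \<kappa> A) - yC \<alpha> Mt \<kappa> A x = (\<Sum>j\<le>A. gap j x)"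
proof -
  have "yS \<alpha> Mt (anc j) j (cen \<kappa> A) = Mt * (8 * gam j) powr \<alpha>" if "j < A" for j
  proof (rule yS_near[OF alpha_pos])
    show "linf (cen \<kappa> A - cen (anc j) j) \<le> 3 * gam (j + 1)"
      using linf_top_ctr[of j] that gam_pos[of "Suc j"] by (simp add: ctr_def)
  qed
  moreover have "yD \<alpha> Mt \<kappa> A (cen \<kappa> A) = Mhat \<alpha> Mt * gam A powr \<alpha>"
    using yD_near[of "cen \<kappa> A" \<kappa> A] gam_pos[of A] alpha_pos
    by (simp add: linf_eq_infnorm infnorm_0)
  moreover have "{..A} = insert A {..<A}"
    by auto
  ultimately show ?thesis
    by (simp add: yC_eq_sum[OF A_pos] gap_def sum_subtractf)
qed

lemma gap_nonneg: "0 \<le> gap j x"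
  using yS_bounds(2)[OF alpha_pos Mt_pos, of "anc j" j x]
    yD_bounds(1)[OF alpha_pos Mt_pos, where \<kappa> = \<kappa> and a = A and x = x]
  by (simp add: gap_def)

lemma gap_le: "j < A \<Longrightarrow> gap j x \<le> Mt * (8 * gam j) powr \<alpha>"
  using yS_bounds(1)[OF alpha_pos Mt_pos, of "anc j" j x] by (simp add: gap_def)

lemma gap_top_le: "gap A x \<le> Mhat \<alpha> Mt * linf (cen \<kappa> A - x) powr \<alpha>"
  using yD_bounds(2)[OF alpha_pos Mt_pos, where \<kappa> = \<kappa> and a = A and x = x]
    linf_commute[of x "cen \<kappa> A"]
  by (simp add: gap_def)

lemma gap_far:
  assumes "j \<le> A" and "gam j < linf (x - ctr j)"
  shows "Mt * (8 * gam j) powr \<alpha> \<le> gap j x"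
proof (cases "j = A")
  case True
  have "Mt * (8 * gam A) powr \<alpha> = 8 powr \<alpha> * Mt * gam A powr \<alpha>"
    using gam_pos[of A] by (simp add: powr_mult)
  also have "\<dots> \<le> Mhat \<alpha> Mt * gam A powr \<alpha>"
    using Mhat_ge[OF alpha_pos Mt_pos] by (simp add: mult_right_mono)
  finally have "Mt * (8 * gam A) powr \<alpha> \<le> Mhat \<alpha> Mt * gam A powr \<alpha>" .
  moreover have "yD \<alpha> Mt \<kappa> A x = 0"
    using yD_far assms(2) True by (simp add: ctr_top)
  ultimately show ?thesis
    using True by (simp add: gap_def)
next
  case False
  then show ?thesis
    using assms(2) yS_far[of j x "anc j"] by (simp add: gap_def ctr_def)
qed

lemma gap_support:
  assumes "j < A" and "0 < gap j x"
  shows "8 * gam j < 80 * linf (cen \<kappa> A - x)"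
proof -
  have "3 * gam (Suc j) < linf (x - ctr j)"
  proof (rule ccontr)
    assume "\<not> 3 * gam (Suc j) < linf (x - ctr j)"
    then have "gap j x = 0"
      using yS_near[OF alpha_pos, of x "anc j" j] assms(1) by (simp add: gap_def ctr_def)
    then show False
      using assms(2) by simp
  qed
  also have "\<dots> \<le> linf (x - cen \<kappa> A) + linf (cen \<kappa> A - ctr j)"
    by (rule linf_triangle)
  also have "\<dots> \<le> linf (cen \<kappa> A - x) + 5 / 2 * gam (Suc j)"
    using linf_top_ctr[of j] assms(1) linf_commute[of x "cen \<kappa> A"] by simp
  finally show ?thesis
    by (simp add: gam_Suc)
qed

lemma sum_gap_lower:
  assumes "x \<in> unitcube"
  shows "Mt * linf (cen \<kappa> A - x) powr \<alpha> \<le> (\<Sum>j\<le>A. gap j x)"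
proof -
  let ?r = "linf (cen \<kappa> A - x)"
  obtain j where "j \<le> A" and "Mt * ?r powr \<alpha> \<le> gap j x"
  proof (cases "?r \<le> gam A")
    case True
    have "Mt \<le> 8 powr \<alpha> * Mt"
      using Mt_pos alpha_pos ge_one_powr_ge_zero[of 8 \<alpha>] by simp
    then have "Mt * ?r powr \<alpha> \<le> Mhat \<alpha> Mt * ?r powr \<alpha>"
      using Mhat_ge[OF alpha_pos Mt_pos] by (simp add: mult_right_mono)
    also have "\<dots> = gap A x"
      using yD_near[of x \<kappa> A] True linf_commute[of x "cen \<kappa> A"] by (simp add: gap_def)
    finally show ?thesis
      using that by blast
  next
    case False
    have "\<exists>j<A. linf (x - ctr j) \<le> gam j \<and> gam (Suc j) < linf (x - ctr (Suc j))"
    proof (rule ccontr)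
      assume "\<not> ?thesis"
      then have "j \<le> A \<Longrightarrow> linf (x - ctr j) \<le> gam j" for j
        using linf_unitcube_cen_0[OF assms] by (induction j) (auto simp: ctr_0 not_less)
      from this[of A] show False
        using False linf_commute[of x "cen \<kappa> A"] by (simp add: ctr_top)
    qed
    then obtain j where j: "j < A" "linf (x - ctr j) \<le> gam j" "gam (Suc j) < linf (x - ctr (Suc j))"
      by blast
    have "?r \<le> linf (x - ctr j) + linf (ctr j - cen \<kappa> A)"
      using linf_triangle[of x "cen \<kappa> A" "ctr j"] linf_commute[of x "cen \<kappa> A"] by simp
    also have "\<dots> \<le> 8 * gam (Suc j)"
      using j(1,2) linf_top_ctr[of j] linf_commute[of "ctr j" "cen \<kappa> A"] gam_pos[of "Suc j"]
      by (simp add: gam_Suc)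
    finally have "Mt * ?r powr \<alpha> \<le> Mt * (8 * gam (Suc j)) powr \<alpha>"
      using Mt_pos alpha_pos by (simp add: powr_mono2 linf_eq_infnorm infnorm_pos_le)
    also have "\<dots> \<le> gap (Suc j) x"
      using gap_far j by simp
    finally show ?thesis
      by (rule that[OF Suc_leI[OF j(1)]])
  qed
  then show ?thesis
    using gap_nonneg by (intro order_trans[OF _ member_le_sum]) auto
qed

lemma sum_gap_upper:
  "(\<Sum>j\<le>A. gap j x) \<le> (Mhat \<alpha> Mt + Mt * 80 powr \<alpha> / (1 - 5 powr - \<alpha>)) * linf (cen \<kappa> A - x) powr \<alpha>"
proof -
  let ?r = "linf (cen \<kappa> A - x)"
  define q where "q = 5 powr - \<alpha>"
  define g where "g j = (8 * gam j) powr \<alpha>" for j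
  have q: "0 \<le> q" "q < 1"
    using alpha_pos by (simp_all add: q_def powr_minus_divide)
  have g_Suc: "g (Suc j) = q * g j" for j
    by (simp add: g_def q_def gam_Suc powr_minus_divide powr_divide)
  have gap_le_trunc: "gap j x \<le> Mt * (if g j \<le> (80 * ?r) powr \<alpha> then g j else 0)" if "j < A" for j
  proof (cases "0 < gap j x")
    case True
    then have "g j \<le> (80 * ?r) powr \<alpha>"
      unfolding g_def using gap_support[OF that True] alpha_pos gam_pos[of j]
      by (intro powr_mono2) auto
    then show ?thesis
      using gap_le[OF that] by (simp add: g_def)
  next
    case False
    then have "gap j x \<le> 0"
      by simp
    moreover have "0 \<le> Mt * (if g j \<le> (80 * ?r) powr \<alpha> then g j else 0)"
      using Mt_pos by (simp add: g_def)
    ultimately show ?thesis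
      by linarith
  qed
  have "(\<Sum>j<A. gap j x) \<le> Mt * (\<Sum>j<A. if g j \<le> (80 * ?r) powr \<alpha> then g j else 0)"
    unfolding sum_distrib_left by (rule sum_mono) (simp add: gap_le_trunc)
  also have "\<dots> \<le> Mt * ((80 * ?r) powr \<alpha> / (1 - q))"
  proof -
    have "(\<Sum>j<A. if g j \<le> (80 * ?r) powr \<alpha> then g j else 0) \<le> (80 * ?r) powr \<alpha> / (1 - q)"
      by (rule sum_geometric_bounded_terms_le[of g q, OF _ g_Suc q]) (simp_all add: g_def)
    then show ?thesis
      using Mt_pos by (intro mult_left_mono) simp_all
  qed
  also have "\<dots> = Mt * 80 powr \<alpha> / (1 - q) * ?r powr \<alpha>"
    by (simp add: powr_mult linf_eq_infnorm infnorm_pos_le)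
  finally have "(\<Sum>j<A. gap j x) \<le> Mt * 80 powr \<alpha> / (1 - q) * ?r powr \<alpha>" .
  then show ?thesis
    using gap_top_le[of x] by (simp add: q_def lessThan_Suc_atMost[symmetric] algebra_simps)
qed

end

theorem lemma5:
  fixes \<alpha> M Mt :: real and n :: nat and \<kappa> :: "'d::finite \<Rightarrow> nat"
  assumes "\<alpha> > 0" and "M > 0" and "Mt > 0"
    and "M / Mt \<ge> (1 / (1 - 5 powr (- \<alpha>))) * (1 + 1 / (5 powr \<alpha> - 3 powr \<alpha>)) * 80 powr \<alpha>"
    and "n \<ge> 1"
    and "\<kappa> \<in> idx (abar n CARD('d))"
    and "Zc \<kappa> (abar n CARD('d)) \<in> U (abar n CARD('d))"
  shows "{x \<in> unitcube. \<forall>z \<in> unitcube. yC \<alpha> Mt \<kappa> (abar n CARD('d)) z \<le> yC \<alpha> Mt \<kappa> (abar n CARD('d)) x}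
           = {cen \<kappa> (abar n CARD('d))}
       \<and> (\<forall>x \<in> unitcube.
            Mt * linf (cen \<kappa> (abar n CARD('d)) - x) powr \<alpha>
              \<le> \<bar>yC \<alpha> Mt \<kappa> (abar n CARD('d)) (cen \<kappa> (abar n CARD('d))) - yC \<alpha> Mt \<kappa> (abar n CARD('d)) x\<bar>
            \<and> \<bar>yC \<alpha> Mt \<kappa> (abar n CARD('d)) (cen \<kappa> (abar n CARD('d))) - yC \<alpha> Mt \<kappa> (abar n CARD('d)) x\<bar>
              \<le> M * linf (cen \<kappa> (abar n CARD('d)) - x) powr \<alpha>)"
proof -
  let ?A = "abar n CARD('d)"
  interpret yC_profile \<kappa> ?A \<alpha> Mt
    using assms by unfold_locales (simp_all add: abar_def)
  let ?y = "yC \<alpha> Mt \<kappa> ?A" and ?c = "cen \<kappa> ?A"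
  have bounds: "Mt * linf (?c - x) powr \<alpha> \<le> ?y ?c - ?y x \<and> ?y ?c - ?y x \<le> M * linf (?c - x) powr \<alpha>"
    if "x \<in> unitcube" for x
  proof -
    have "(Mhat \<alpha> Mt + Mt * 80 powr \<alpha> / (1 - 5 powr - \<alpha>)) * linf (?c - x) powr \<alpha> \<le> M * linf (?c - x) powr \<alpha>"
      using Mhat_add_le[OF assms(1,3,4)] by (simp add: mult_right_mono)
    then show ?thesis
      using sum_gap_lower[OF that] sum_gap_upper[of x] yC_drop_eq_sum_gap[of x] by linarith
  qed
  have strict: "?y x < ?y ?c" if "x \<in> unitcube" and "x \<noteq> ?c" for x
  proof -
    have "0 < Mt * linf (?c - x) powr \<alpha>"
      using that(2) assms(3) by (simp add: linf_eq_infnorm infnorm_eq_0)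
    then show ?thesis
      using bounds[OF that(1)] by linarith
  qed
  have "0 \<le> Mt * linf (?c - x) powr \<alpha>" for x
    using assms(3) by simp
  then have "0 \<le> ?y ?c - ?y x" if "x \<in> unitcube" for x
    using bounds[OF that] by (meson order_trans)
  then show ?thesis
    using argmax_eq_singleton[of ?c unitcube ?y, OF cen_in_unitcube[OF assms(6)] strict] bounds
    by simp
qed

end
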